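(* For every positive integer $n$, the variety of complex $n$-dimensional nilpotent binary Leibniz algebras contains at least one rigid algebra.
   Context: An algebra is a Leibniz algebra if it satisfies $(xy)z=(xz)y+x(yz)$; it is a binary Leibniz algebra if every subalgebra generated by two elements is a Leibniz algebra; it is nilpotent if for some $m$ every product of $m$ elements (any bracketing) vanishes. The variety is the Zariski-closed set of bilinear products on a fixed $n$-dimensional complex vector space $V$ (identified with structure constants in $\mathbb{C}^{n^3}$) satisfying these conditions, with $GL(V)$ acting by $(g*\mu)(x,y)=g\mu(g^{-1}x,g^{-1}y)$. An algebra is rigid if its $GL(V)$-orbit is Zariski-open in the variety. *)

theory Defs
  imports "HOL-Analysis.Analysis"
begin

text \<open>An n-dimensional complex vector space is modelled as complex^'n for a finite
  type 'n (n = CARD('n) >= 1).  A bilinear product is given by its structure constants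
  c :: 'n \<times> 'n \<times> 'n \<Rightarrow> complex, i.e. a point of C^(n^3).\<close>

type_synonym 'n sconst = "'n \<times> 'n \<times> 'n \<Rightarrow> complex"

definition alg_mult :: "'n::finite sconst \<Rightarrow> complex^'n \<Rightarrow> complex^'n \<Rightarrow> complex^'n" where
  "alg_mult c x y = (\<chi> k. \<Sum>i\<in>UNIV. \<Sum>j\<in>UNIV. x$i * y$j * c (i, j, k))"

definition sconst_of :: "(complex^'n \<Rightarrow> complex^'n \<Rightarrow> complex^'n) \<Rightarrow> 'n::finite sconst" where
  "sconst_of B = (\<lambda>(i, j, k). B (axis i 1) (axis j 1) $ k)"

definition gl_act :: "complex^'n^'n \<Rightarrow> 'n::finite sconst \<Rightarrow> 'n sconst" where
  "gl_act g c = sconst_of (\<lambda>x y. g *v alg_mult c (matrix_inv g *v x) (matrix_inv g *v y))"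

definition orbit :: "'n::finite sconst \<Rightarrow> 'n sconst set" where
  "orbit c = {gl_act g c | g. invertible g}"

definition leibniz_identity :: "'n::finite sconst \<Rightarrow> complex^'n \<Rightarrow> complex^'n \<Rightarrow> complex^'n \<Rightarrow> bool" where
  "leibniz_identity c x y z \<longleftrightarrow>
     alg_mult c (alg_mult c x y) z = alg_mult c (alg_mult c x z) y + alg_mult c x (alg_mult c y z)"

inductive_set gen_subalg :: "'n::finite sconst \<Rightarrow> complex^'n \<Rightarrow> complex^'n \<Rightarrow> (complex^'n) set"
  for c a b where
  gen_a: "a \<in> gen_subalg c a b"
| gen_b: "b \<in> gen_subalg c a b"
| gen_add: "x \<in> gen_subalg c a b \<Longrightarrow> y \<in> gen_subalg c a b \<Longrightarrow> x + y \<in> gen_subalg c a b"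
| gen_smult: "x \<in> gen_subalg c a b \<Longrightarrow> r *s x \<in> gen_subalg c a b"
| gen_mult: "x \<in> gen_subalg c a b \<Longrightarrow> y \<in> gen_subalg c a b \<Longrightarrow> alg_mult c x y \<in> gen_subalg c a b"

definition binary_leibniz :: "'n::finite sconst \<Rightarrow> bool" where
  "binary_leibniz c \<longleftrightarrow> (\<forall>a b. \<forall>x\<in>gen_subalg c a b. \<forall>y\<in>gen_subalg c a b. \<forall>z\<in>gen_subalg c a b.
      leibniz_identity c x y z)"

inductive is_product :: "'n::finite sconst \<Rightarrow> nat \<Rightarrow> complex^'n \<Rightarrow> bool" for c where
  prod_one: "is_product c 1 x"
| prod_mult: "is_product c i u \<Longrightarrow> is_product c j v \<Longrightarrow> is_product c (i + j) (alg_mult c u v)"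

definition nilpotent_alg :: "'n::finite sconst \<Rightarrow> bool" where
  "nilpotent_alg c \<longleftrightarrow> (\<exists>m>0. \<forall>x. is_product c m x \<longrightarrow> x = 0)"

definition nbl_variety :: "'n::finite sconst set" where
  "nbl_variety = {c. nilpotent_alg c \<and> binary_leibniz c}"

inductive poly_fun :: "(('a \<Rightarrow> complex) \<Rightarrow> complex) \<Rightarrow> bool" where
  pf_const: "poly_fun (\<lambda>_. a)"
| pf_var: "poly_fun (\<lambda>x. x i)"
| pf_add: "poly_fun p \<Longrightarrow> poly_fun q \<Longrightarrow> poly_fun (\<lambda>x. p x + q x)"
| pf_mult: "poly_fun p \<Longrightarrow> poly_fun q \<Longrightarrow> poly_fun (\<lambda>x. p x * q x)"

definition zariski_closed :: "('a \<Rightarrow> complex) set \<Rightarrow> bool" where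
  "zariski_closed S \<longleftrightarrow> (\<exists>P. (\<forall>p\<in>P. poly_fun p) \<and> S = {x. \<forall>p\<in>P. p x = 0})"

definition zariski_open_in :: "('a \<Rightarrow> complex) set \<Rightarrow> ('a \<Rightarrow> complex) set \<Rightarrow> bool" where
  "zariski_open_in X U \<longleftrightarrow> (\<exists>Z. zariski_closed Z \<and> U = X - Z)"

definition rigid_in :: "'n::finite sconst set \<Rightarrow> 'n sconst \<Rightarrow> bool" where
  "rigid_in X c \<longleftrightarrow> c \<in> X \<and> zariski_open_in X (orbit c)"

end

theory Submission
  imports Defs
begin

(* The null-filiform algebra N, with basis e_0, ..., e_(n-1) and e_k e_0 = e_(k+1) as its only
   nonzero products of basis vectors, is Leibniz and nilpotent. Its orbit is the set of algebras
   in the variety having an element x whose right powers x, R_x x, ..., R_x^(n-1) x form a basis: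
   the binary Leibniz identity on the subalgebra generated by x gives u (R_x^(k+1) x) = 0, and
   nilpotency forces R_x^n x = 0, so e_k |-> R_x^k x is an isomorphism from N. The complement of
   the orbit is cut out by the polynomials c |-> det [x, R_x x, ..., R_x^(n-1) x], one for each x,
   so the orbit is open. *)

interpretation alg_mult_left: Vector_Spaces.linear "(*s)" "(*s)" "\<lambda>x. alg_mult c x y"
  by unfold_locales (simp_all add: vec_eq_iff alg_mult_def sum.distrib sum_distrib_left algebra_simps)

interpretation alg_mult_right: Vector_Spaces.linear "(*s)" "(*s)" "alg_mult c x"
  by unfold_locales (simp_all add: vec_eq_iff alg_mult_def sum.distrib sum_distrib_left algebra_simps)

lemma sum_mult_axis: "(\<Sum>l\<in>UNIV. f l * axis i (1::'a::semiring_1) $ l) = f i"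
  by (simp add: axis_def if_distrib cong: if_cong)

lemma matrix_vector_mult_axis: "((A::'a::semiring_1^'n^'m) *v axis i 1) $ j = A $ j $ i"
  by (simp add: matrix_vector_mult_def sum_mult_axis)

lemma matrix_inv_cancel:
  fixes g :: "'a::semiring_1^'n^'n"
  assumes "invertible g"
  shows "g *v (matrix_inv g *v x) = x" and "matrix_inv g *v (g *v x) = x"
proof -
  have "g ** matrix_inv g = mat 1" and "matrix_inv g ** g = mat 1"
    using someI_ex[OF assms[unfolded invertible_def]] unfolding matrix_inv_def by auto
  then show "g *v (matrix_inv g *v x) = x" and "matrix_inv g *v (g *v x) = x"
    by (simp_all add: matrix_vector_mul_assoc)
qed

lemma alg_mult_axis_axis: "alg_mult c (axis i 1) (axis j 1) $ k = c (i, j, k)"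
proof -
  have "alg_mult c (axis i 1) (axis j 1) $ k =
      (\<Sum>i'\<in>UNIV. \<Sum>j'\<in>UNIV. (c (i', j', k) * axis i 1 $ i') * axis j 1 $ j')"
    unfolding alg_mult_def by (simp add: mult_ac)
  also have "\<dots> = c (i, j, k)"
    by (simp only: sum_mult_axis)
  finally show ?thesis .
qed

lemma sconst_of_alg_mult [simp]: "sconst_of (alg_mult c) = c"
  by (auto simp: sconst_of_def alg_mult_axis_axis)

lemma alg_mult_sum_scale:
  "alg_mult c (\<Sum>i\<in>I. a i *s u i) (\<Sum>j\<in>J. b j *s v j) =
     (\<Sum>i\<in>I. \<Sum>j\<in>J. (a i * b j) *s alg_mult c (u i) (v j))"
proof -
  have "alg_mult c (\<Sum>i\<in>I. a i *s u i) (\<Sum>j\<in>J. b j *s v j) =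
      (\<Sum>j\<in>J. b j *s (\<Sum>i\<in>I. a i *s alg_mult c (u i) (v j)))"
    by (simp only: alg_mult_left.sum alg_mult_right.sum alg_mult_left.scale alg_mult_right.scale)
  also have "\<dots> = (\<Sum>j\<in>J. \<Sum>i\<in>I. (a i * b j) *s alg_mult c (u i) (v j))"
    by (simp add: vec.scale_sum_right vector_smult_assoc mult.commute)
  also have "\<dots> = (\<Sum>i\<in>I. \<Sum>j\<in>J. (a i * b j) *s alg_mult c (u i) (v j))"
    by (rule sum.swap)
  finally show ?thesis .
qed

lemma alg_mult_basis_expansion:
  "alg_mult c x y = (\<Sum>i\<in>UNIV. \<Sum>j\<in>UNIV. (x$i * y$j) *s alg_mult c (axis i 1) (axis j 1))"
  by (subst (1 2) basis_expansion[symmetric]) (rule alg_mult_sum_scale)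

lemma alg_mult_sconst_of:
  assumes "\<And>x y. B x y = (\<Sum>i\<in>UNIV. \<Sum>j\<in>UNIV. (x$i * y$j) *s B (axis i 1) (axis j 1))"
  shows "alg_mult (sconst_of B) = B"
proof (intro ext)
  fix x y
  have basis: "alg_mult (sconst_of B) (axis i 1) (axis j 1) = B (axis i 1) (axis j 1)" for i j
    by (simp add: vec_eq_iff alg_mult_axis_axis sconst_of_def)
  have "alg_mult (sconst_of B) x y = (\<Sum>i\<in>UNIV. \<Sum>j\<in>UNIV. (x$i * y$j) *s B (axis i 1) (axis j 1))"
    by (simp only: alg_mult_basis_expansion[of "sconst_of B" x y] basis)
  also have "\<dots> = B x y"
    by (rule assms[symmetric])
  finally show "alg_mult (sconst_of B) x y = B x y" .
qed

lemma alg_mult_gl_act: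
  "alg_mult (gl_act g c) x y = g *v alg_mult c (matrix_inv g *v x) (matrix_inv g *v y)"
  unfolding gl_act_def
proof (rule fun_cong[OF fun_cong[OF alg_mult_sconst_of]])
  fix x y :: "complex^'a"
  let ?h = "matrix_inv g"
  have "g *v alg_mult c (?h *v x) (?h *v y) =
      g *v alg_mult c (\<Sum>i\<in>UNIV. x$i *s (?h *v axis i 1)) (\<Sum>j\<in>UNIV. y$j *s (?h *v axis j 1))"
    by (simp only: vec.sum[symmetric] vec.scale[symmetric] basis_expansion)
  then show "g *v alg_mult c (?h *v x) (?h *v y) =
      (\<Sum>i\<in>UNIV. \<Sum>j\<in>UNIV. (x$i * y$j) *s (g *v alg_mult c (?h *v axis i 1) (?h *v axis j 1)))"
    by (simp add: alg_mult_sum_scale vec.sum vec.scale)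
qed

lemma alg_mult_gl_act_image:
  assumes "invertible g"
  shows "alg_mult (gl_act g c) (g *v u) (g *v w) = g *v alg_mult c u w"
  by (simp add: alg_mult_gl_act matrix_inv_cancel[OF assms])

lemma alg_mult_matrix_image_eqI:
  assumes "\<And>i j. alg_mult c' (g *v axis i 1) (g *v axis j 1) = g *v alg_mult c (axis i 1) (axis j 1)"
  shows "alg_mult c' (g *v u) (g *v w) = g *v alg_mult c u w"
proof -
  have "alg_mult c' (g *v u) (g *v w) =
      alg_mult c' (\<Sum>i\<in>UNIV. u$i *s (g *v axis i 1)) (\<Sum>j\<in>UNIV. w$j *s (g *v axis j 1))"
    by (simp only: vec.sum[symmetric] vec.scale[symmetric] basis_expansion)
  also have "\<dots> = (\<Sum>i\<in>UNIV. \<Sum>j\<in>UNIV. (u$i * w$j) *s (g *v alg_mult c (axis i 1) (axis j 1)))"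
    by (simp only: alg_mult_sum_scale assms)
  also have "\<dots> = g *v alg_mult c u w"
    by (simp add: alg_mult_basis_expansion[of c u w] vec.sum vec.scale)
  finally show ?thesis .
qed

lemma gl_act_eqI:
  assumes g: "invertible g"
    and basis: "\<And>i j. alg_mult c' (g *v axis i 1) (g *v axis j 1) = g *v alg_mult c (axis i 1) (axis j 1)"
  shows "gl_act g c = c'"
proof -
  have "alg_mult (gl_act g c) = alg_mult c'"
    by (intro ext) (metis alg_mult_gl_act alg_mult_matrix_image_eqI[OF basis] matrix_inv_cancel(1)[OF g])
  then show ?thesis
    by (metis sconst_of_alg_mult)
qed

definition leibniz_alg :: "'n::finite sconst \<Rightarrow> bool" where
  "leibniz_alg c \<longleftrightarrow> (\<forall>x y z. leibniz_identity c x y z)"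

lemma nbl_variety_if_leibniz_alg_nilpotent:
  "leibniz_alg c \<Longrightarrow> nilpotent_alg c \<Longrightarrow> c \<in> nbl_variety"
  by (simp add: nbl_variety_def binary_leibniz_def leibniz_alg_def)

lemma leibniz_alg_gl_act:
  assumes g: "invertible g" and "leibniz_alg c"
  shows "leibniz_alg (gl_act g c)"
  unfolding leibniz_alg_def leibniz_identity_def
proof (intro allI)
  fix x y z
  let ?h = "matrix_inv g"
  have "alg_mult c (alg_mult c (?h *v x) (?h *v y)) (?h *v z) =
      alg_mult c (alg_mult c (?h *v x) (?h *v z)) (?h *v y) +
      alg_mult c (?h *v x) (alg_mult c (?h *v y) (?h *v z))"
    using assms(2) unfolding leibniz_alg_def leibniz_identity_def by blast
  then show "alg_mult (gl_act g c) (alg_mult (gl_act g c) x y) z =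
      alg_mult (gl_act g c) (alg_mult (gl_act g c) x z) y +
      alg_mult (gl_act g c) x (alg_mult (gl_act g c) y z)"
    unfolding alg_mult_gl_act matrix_inv_cancel[OF g] by (simp only: vec.add)
qed

lemma is_product_gl_act:
  assumes g: "invertible g" and "is_product (gl_act g c) m p"
  shows "is_product c m (matrix_inv g *v p)"
  using assms(2)
proof (induction rule: is_product.induct)
  case (prod_one x)
  show ?case by (rule is_product.prod_one)
next
  case (prod_mult i u j v)
  then show ?case by (simp add: alg_mult_gl_act matrix_inv_cancel[OF g] is_product.prod_mult)
qed

lemma nilpotent_alg_gl_act:
  assumes g: "invertible g" and "nilpotent_alg c"
  shows "nilpotent_alg (gl_act g c)"
proof -
  obtain m where "m > 0" and m: "\<And>x. is_product c m x \<Longrightarrow> x = 0"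
    using assms(2) unfolding nilpotent_alg_def by blast
  have "p = 0" if "is_product (gl_act g c) m p" for p
    using m[OF is_product_gl_act[OF g that]] matrix_inv_cancel(1)[OF g, of p] by simp
  with \<open>m > 0\<close> show ?thesis
    unfolding nilpotent_alg_def by blast
qed

lemma linear_funpow:
  fixes f :: "'a::field^'n \<Rightarrow> 'a^'n"
  assumes "Vector_Spaces.linear (*s) (*s) f"
  shows "Vector_Spaces.linear (*s) (*s) (f ^^ k)"
  by (induction k) (simp_all only: funpow.simps vec.linear_id Vector_Spaces.linear_compose assms)

lemma funpow_eq_0_beyond:
  fixes f :: "'a::field^'n \<Rightarrow> 'a^'n"
  assumes lin: "Vector_Spaces.linear (*s) (*s) f" and "(f ^^ N) y = 0" and "N \<le> k"
  shows "(f ^^ k) y = 0"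
proof -
  interpret Vector_Spaces.linear "(*s)" "(*s)" "f ^^ (k - N)"
    by (rule linear_funpow[OF lin])
  have "(f ^^ k) y = (f ^^ (k - N)) ((f ^^ N) y)"
    using \<open>N \<le> k\<close> by (simp add: funpow_add[symmetric, THEN fun_cong, unfolded o_apply])
  with assms(2) show ?thesis
    by simp
qed

lemma funpow_eq_0_if_in_span_of_lower:
  fixes f :: "'a::field^'n \<Rightarrow> 'a^'n"
  assumes lin: "Vector_Spaces.linear (*s) (*s) f"
    and nil: "(f ^^ N) y = 0"
    and span: "(f ^^ n) y = (\<Sum>i<n. a i *s (f ^^ i) y)"
  shows "(f ^^ n) y = 0"
proof (rule ccontr)
  let ?p = "\<lambda>k. (f ^^ k) y"
  assume pn: "?p n \<noteq> 0"
  have shift: "?p (k + j) = (f ^^ j) (?p k)" for k j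
    by (simp add: funpow_add add.commute[of k])
  define K where "K = Max {k. ?p k \<noteq> 0}"
  have fin: "finite {k. ?p k \<noteq> 0}"
    by (rule finite_subset[of _ "{..<N}"]) (auto intro: funpow_eq_0_beyond[OF lin nil] simp: not_less[symmetric])
  have pK: "?p K \<noteq> 0" and nK: "n \<le> K" and above: "\<And>k. K < k \<Longrightarrow> ?p k = 0"
    using Max_in[OF fin] Max_ge[OF fin] pn unfolding K_def by fastforce+
  obtain i1 where "i1 < n" "a i1 \<noteq> 0"
  proof (rule ccontr)
    assume "\<not> thesis"
    then have "(\<Sum>i<n. a i *s ?p i) = 0"
      using that by (intro sum.neutral) auto
    with pn span show False
      by simp
  qed
  then obtain i0 where i0: "a i0 \<noteq> 0" "i0 < n" and below: "\<And>i. i < i0 \<Longrightarrow> a i = 0"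
    using exists_least_iff[of "\<lambda>i. a i \<noteq> 0"] by (metis not_less order.strict_trans1)
  (* Applying f ^^ (K - i0) to the relation kills every term but the one of index i0. *)
  define j where "j = K - i0"
  interpret fj: Vector_Spaces.linear "(*s)" "(*s)" "f ^^ j"
    by (rule linear_funpow[OF lin])
  have "?p (n + j) = (\<Sum>i<n. a i *s ?p (i + j))"
    by (simp add: shift span fj.sum fj.scale)
  also have "\<dots> = (\<Sum>i<n. if i = i0 then a i0 *s ?p K else 0)"
  proof (rule sum.cong[OF refl])
    fix i
    show "a i *s ?p (i + j) = (if i = i0 then a i0 *s ?p K else 0)"
      using below[of i] above[of "i + j"] i0 nK by (cases i i0 rule: linorder_cases) (auto simp: j_def)
  qed
  also have "\<dots> = a i0 *s ?p K"
    using i0(2) by simp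
  finally have "a i0 *s ?p K = 0"
    using above[of "n + j"] i0(2) nK by (simp add: j_def)
  with i0(1) pK show False
    by simp
qed

definition idx :: "'n::finite \<Rightarrow> nat" where
  "idx = (SOME h. bij_betw h (UNIV::'n set) {0..<CARD('n)})"

definition elem_at :: "nat \<Rightarrow> 'n::finite" where
  "elem_at = inv_into UNIV idx"

lemma bij_betw_idx: "bij_betw (idx::'n::finite \<Rightarrow> nat) UNIV {0..<CARD('n)}"
  unfolding idx_def by (rule someI_ex[OF ex_bij_betw_finite_nat[OF finite_class.finite_UNIV]])

lemma idx_less: "idx (i::'n::finite) < CARD('n)"
  using bij_betw_idx[where 'n='n] by (auto simp: bij_betw_def)

lemma elem_at_idx [simp]: "elem_at (idx (i::'n::finite)) = i"
  using bij_betw_idx[where 'n='n] unfolding elem_at_def bij_betw_def by (simp add: inv_into_f_f)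

lemma idx_elem_at: "k < CARD('n::finite) \<Longrightarrow> idx (elem_at k :: 'n) = k"
  using bij_betw_idx[where 'n='n] unfolding elem_at_def bij_betw_def by (simp add: f_inv_into_f)

lemma eq_elem_at_iff: "k < CARD('n::finite) \<Longrightarrow> (i::'n) = elem_at k \<longleftrightarrow> idx i = k"
  by (metis elem_at_idx idx_elem_at)

lemma idx_elem_at_0 [simp]: "idx (elem_at 0 :: 'n::finite) = 0"
  by (simp add: idx_elem_at)

lemma elem_at_eq_iff: "k < CARD('n::finite) \<Longrightarrow> elem_at k = (i::'n) \<longleftrightarrow> idx i = k"
  by (metis elem_at_idx idx_elem_at)

definition null_filiform :: "'n::finite sconst" where
  "null_filiform = (\<lambda>(i, j, k). if idx j = 0 \<and> idx k = Suc (idx i) then 1 else 0)"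

lemma null_filiform_mult:
  "alg_mult null_filiform u w $ k =
     (if idx k = 0 then 0 else u $ elem_at (idx k - 1) * w $ elem_at 0)"
proof (cases "idx k = 0")
  case True
  then show ?thesis
    by (simp add: alg_mult_def null_filiform_def)
next
  case False
  have cond: "(idx j = 0 \<and> idx k = Suc (idx i)) \<longleftrightarrow> (i = elem_at (idx k - 1) \<and> j = elem_at 0)"
    for i j :: 'a
    using False idx_less[of k] by (auto simp: eq_elem_at_iff)
  let ?a = "elem_at (idx k - 1) :: 'a" and ?b = "elem_at 0 :: 'a"
  have "alg_mult null_filiform u w $ k =
      (\<Sum>i\<in>UNIV. \<Sum>j\<in>UNIV. (if i = ?a then u $ i else 0) * (if j = ?b then w $ j else 0))"
    unfolding alg_mult_def null_filiform_def vec_lambda_beta by (intro sum.cong refl) (auto simp: cond)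
  also have "\<dots> = (\<Sum>i\<in>UNIV. if i = ?a then u $ i else 0) * (\<Sum>j\<in>UNIV. if j = ?b then w $ j else 0)"
    by (rule sum_product[symmetric])
  finally show ?thesis
    using False by simp
qed

lemma leibniz_alg_null_filiform: "leibniz_alg null_filiform"
  by (simp add: leibniz_alg_def leibniz_identity_def vec_eq_iff null_filiform_mult)

lemma is_product_pos: "is_product c m x \<Longrightarrow> 1 \<le> m"
  by (induction rule: is_product.induct) auto

lemma is_product_null_filiform_nth:
  assumes "is_product null_filiform m p" and "Suc (idx k) < m"
  shows "p $ k = 0"
  using assms
proof (induction arbitrary: k rule: is_product.induct)
  case (prod_one x)
  then show ?case by simp
next
  case (prod_mult i u j v)
  show ?case
  proof (cases "idx k = 0 \<or> j = 1")
    case True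
    then have "idx k = 0 \<or> Suc (idx (elem_at (idx k - 1) :: 'a)) < i"
      using prod_mult.prems idx_less[of k] by (auto simp: idx_elem_at)
    then show ?thesis
      using prod_mult.IH(1) by (auto simp: null_filiform_mult)
  next
    case False
    then have "Suc (idx (elem_at 0 :: 'a)) < j"
      using is_product_pos[OF prod_mult.hyps(2)] by (simp add: idx_elem_at)
    then show ?thesis
      using prod_mult.IH(2) by (simp add: null_filiform_mult)
  qed
qed

lemma nilpotent_null_filiform: "nilpotent_alg (null_filiform :: 'n::finite sconst)"
  unfolding nilpotent_alg_def
proof (intro exI[of _ "Suc CARD('n)"] conjI allI impI)
  fix p :: "complex^'n"
  assume "is_product null_filiform (Suc CARD('n)) p"
  then show "p = 0"
    using is_product_null_filiform_nth idx_less by (force simp: vec_eq_iff)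
qed simp

lemma null_filiform_mult_axis:
  "alg_mult (null_filiform :: 'n::finite sconst) (axis i 1) (axis j 1) =
     (if idx j = 0 \<and> Suc (idx i) < CARD('n) then axis (elem_at (Suc (idx i))) 1 else 0)"
  unfolding vec_eq_iff
proof
  fix l :: 'n
  have "elem_at (idx l - 1) = i \<longleftrightarrow> idx i = idx l - 1"
    using idx_less[of l] by (simp add: elem_at_eq_iff)
  moreover have "elem_at 0 = j \<longleftrightarrow> idx j = 0"
    by (simp add: elem_at_eq_iff)
  moreover have "l = elem_at (Suc (idx i)) \<longleftrightarrow> idx l = Suc (idx i)" if "Suc (idx i) < CARD('n)"
    using that by (simp add: eq_elem_at_iff)
  ultimately show "alg_mult null_filiform (axis i 1) (axis j 1) $ l =
      (if idx j = 0 \<and> Suc (idx i) < CARD('n) then axis (elem_at (Suc (idx i))) 1 else 0) $ l"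
    using idx_less[of l] by (auto simp: null_filiform_mult axis_def)
qed

abbreviation right_mult :: "'n::finite sconst \<Rightarrow> complex^'n \<Rightarrow> complex^'n \<Rightarrow> complex^'n" where
  "right_mult c x \<equiv> \<lambda>v. alg_mult c v x"

lemma is_product_right_power: "is_product c (Suc k) ((right_mult c x ^^ k) x)"
proof (induction k)
  case 0
  show ?case using is_product.prod_one[of c x] by simp
next
  case (Suc k)
  show ?case
    using is_product.prod_mult[OF Suc is_product.prod_one, of x] by simp
qed

lemma right_power_in_gen_subalg: "(right_mult c x ^^ k) x \<in> gen_subalg c x x"
  by (induction k) (auto intro: gen_subalg.intros)

lemma right_power_gl_act:
  assumes "invertible g"
  shows "(right_mult (gl_act g c) (g *v x) ^^ k) (g *v y) = g *v (right_mult c x ^^ k) y"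
  by (induction k) (simp_all add: alg_mult_gl_act_image[OF assms])

lemma right_power_null_filiform:
  assumes "k < CARD('n::finite)"
  shows "(right_mult (null_filiform :: 'n sconst) (axis (elem_at 0) 1) ^^ k) (axis (elem_at 0) 1) =
    axis (elem_at k) 1"
  using assms
  by (induction k) (simp_all add: null_filiform_mult_axis idx_elem_at)

(* The Leibniz identity for u, R_x^(k+1) x, x expresses u (R_x^(k+2) x) through
   (u (R_x^(k+1) x)) x and (u x) (R_x^(k+1) x), both zero by induction. *)
lemma binary_leibniz_mult_right_power:
  assumes bl: "binary_leibniz c" and u: "u \<in> gen_subalg c x x"
  shows "alg_mult c u ((right_mult c x ^^ Suc k) x) = 0"
  using u
proof (induction k arbitrary: u)
  case 0
  have "leibniz_identity c u x x"
    using bl 0 gen_subalg.gen_a unfolding binary_leibniz_def by blast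
  then show ?case
    by (simp add: leibniz_identity_def)
next
  case (Suc k)
  have "leibniz_identity c u ((right_mult c x ^^ Suc k) x) x"
    using bl Suc.prems gen_subalg.gen_a right_power_in_gen_subalg unfolding binary_leibniz_def by blast
  moreover have "alg_mult c u x \<in> gen_subalg c x x"
    using Suc.prems gen_subalg.gen_a by (rule gen_subalg.gen_mult)
  ultimately show ?case
    using Suc.IH[of u] Suc.IH[of "alg_mult c u x"] Suc.prems
    by (simp add: leibniz_identity_def)
qed

definition right_power_matrix :: "'n::finite sconst \<Rightarrow> complex^'n \<Rightarrow> complex^'n^'n" where
  "right_power_matrix c x = (\<chi> r i. (right_mult c x ^^ idx i) x $ r)"

lemma right_power_matrix_axis: "right_power_matrix c x *v axis i 1 = (right_mult c x ^^ idx i) x"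
  by (simp add: vec_eq_iff matrix_vector_mult_axis right_power_matrix_def)

lemma right_power_card_eq_0:
  fixes c :: "'n::finite sconst"
  assumes nil: "nilpotent_alg c" and det: "det (right_power_matrix c x) \<noteq> 0"
  shows "(right_mult c x ^^ CARD('n)) x = 0"
proof -
  obtain m where "m > 0" and "\<And>p. is_product c m p \<Longrightarrow> p = 0"
    using nil unfolding nilpotent_alg_def by blast
  then have vanish: "(right_mult c x ^^ (m - 1)) x = 0"
    using is_product_right_power[of c "m - 1" x] by simp
  let ?g = "right_power_matrix c x"
  let ?a = "matrix_inv ?g *v (right_mult c x ^^ CARD('n)) x"
  have "(right_mult c x ^^ CARD('n)) x = ?g *v ?a"
    using det by (simp add: matrix_inv_cancel invertible_det_nz)
  also have "\<dots> = (\<Sum>i\<in>UNIV. ?a $ i *s (right_mult c x ^^ idx i) x)"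
    by (subst (1) basis_expansion[symmetric]) (simp add: vec.sum vec.scale right_power_matrix_axis)
  also have "\<dots> = (\<Sum>k<CARD('n). ?a $ elem_at k *s (right_mult c x ^^ k) x)"
    using sum.reindex_bij_betw[OF bij_betw_idx[where 'n='n], of "\<lambda>k. ?a $ elem_at k *s (right_mult c x ^^ k) x"]
    by (simp add: atLeast0LessThan)
  finally show ?thesis
    by (rule funpow_eq_0_if_in_span_of_lower[OF alg_mult_left.linear_axioms vanish])
qed

lemma gl_act_right_power_matrix:
  fixes c :: "'n::finite sconst"
  assumes c: "c \<in> nbl_variety" and det: "det (right_power_matrix c x) \<noteq> 0"
  shows "gl_act (right_power_matrix c x) null_filiform = c"
proof (rule gl_act_eqI)
  let ?g = "right_power_matrix c x" and ?p = "\<lambda>k. (right_mult c x ^^ k) x"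
  show "invertible ?g"
    using det by (simp add: invertible_det_nz)
  have bl: "binary_leibniz c" and top: "?p CARD('n) = 0"
    using c right_power_card_eq_0[OF _ det] by (auto simp: nbl_variety_def)
  fix i j :: 'n
  show "alg_mult c (?g *v axis i 1) (?g *v axis j 1) = ?g *v alg_mult null_filiform (axis i 1) (axis j 1)"
  proof (cases "idx j = 0")
    case True
    have "?p (Suc (idx i)) = 0" if "\<not> Suc (idx i) < CARD('n)"
    proof -
      have "Suc (idx i) = CARD('n)"
        using that idx_less[of i] by simp
      then show ?thesis
        using top by (simp only:)
    qed
    then show ?thesis
      using True by (simp add: null_filiform_mult_axis right_power_matrix_axis idx_elem_at)
  next
    case False
    then obtain k where "idx j = Suc k"
      using not0_implies_Suc by blast
    then show ?thesis
      using False binary_leibniz_mult_right_power[OF bl right_power_in_gen_subalg]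
      by (simp add: null_filiform_mult_axis right_power_matrix_axis)
  qed
qed

lemma right_power_matrix_gl_act_null_filiform:
  assumes "invertible g"
  shows "right_power_matrix (gl_act g null_filiform) (g *v axis (elem_at 0) 1) = g"
  by (simp add: vec_eq_iff right_power_matrix_def right_power_gl_act[OF assms]
      right_power_null_filiform idx_less matrix_vector_mult_axis)

lemma orbit_null_filiform:
  "orbit null_filiform = nbl_variety - {c. \<forall>x. det (right_power_matrix c x) = 0}"
proof
  show "orbit null_filiform \<subseteq> nbl_variety - {c. \<forall>x. det (right_power_matrix c x) = 0}"
  proof
    fix c
    assume "c \<in> orbit null_filiform"
    then obtain g where g: "invertible g" and c: "c = gl_act g null_filiform"
      unfolding orbit_def by blast
    have "c \<in> nbl_variety"
      unfolding c
      by (intro nbl_variety_if_leibniz_alg_nilpotent leibniz_alg_gl_act nilpotent_alg_gl_act g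
          leibniz_alg_null_filiform nilpotent_null_filiform)
    moreover have "det (right_power_matrix c (g *v axis (elem_at 0) 1)) \<noteq> 0"
      using g by (simp add: c right_power_matrix_gl_act_null_filiform invertible_det_nz)
    ultimately show "c \<in> nbl_variety - {c. \<forall>x. det (right_power_matrix c x) = 0}"
      by blast
  qed
next
  show "nbl_variety - {c. \<forall>x. det (right_power_matrix c x) = 0} \<subseteq> orbit null_filiform"
  proof
    fix c
    assume "c \<in> nbl_variety - {c. \<forall>x. det (right_power_matrix c x) = 0}"
    then obtain x where "c \<in> nbl_variety" and det: "det (right_power_matrix c x) \<noteq> 0"
      by blast
    then have "c = gl_act (right_power_matrix c x) null_filiform"
      by (simp add: gl_act_right_power_matrix)
    with det show "c \<in> orbit null_filiform"
      unfolding orbit_def by (auto simp: invertible_det_nz)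
  qed
qed

lemma poly_fun_sum:
  "finite I \<Longrightarrow> (\<And>i. i \<in> I \<Longrightarrow> poly_fun (f i)) \<Longrightarrow> poly_fun (\<lambda>x. \<Sum>i\<in>I. f i x)"
  by (induction I rule: finite_induct) (auto intro: poly_fun.intros)

lemma poly_fun_prod:
  "finite I \<Longrightarrow> (\<And>i. i \<in> I \<Longrightarrow> poly_fun (f i)) \<Longrightarrow> poly_fun (\<lambda>x. \<Prod>i\<in>I. f i x)"
  by (induction I rule: finite_induct) (auto intro: poly_fun.intros)

lemma poly_fun_alg_mult_nth:
  assumes "\<And>i. poly_fun (\<lambda>c. u c $ i)" and "\<And>j. poly_fun (\<lambda>c. v c $ j)"
  shows "poly_fun (\<lambda>c. alg_mult c (u c) (v c) $ l)"
  unfolding alg_mult_def vec_lambda_beta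
  by (intro poly_fun_sum poly_fun.pf_mult assms poly_fun.pf_var) simp_all

lemma poly_fun_right_power_nth: "poly_fun (\<lambda>c::'n::finite sconst. (right_mult c x ^^ k) y $ l)"
proof (induction k arbitrary: l)
  case 0
  show ?case by (simp add: poly_fun.pf_const)
next
  case (Suc k)
  show ?case
    unfolding funpow.simps o_apply
    by (intro poly_fun_alg_mult_nth Suc poly_fun.pf_const)
qed

lemma zariski_closed_singular_right_power_matrices:
  "zariski_closed {c::'n::finite sconst. \<forall>x. det (right_power_matrix c x) = 0}"
proof -
  have "poly_fun (\<lambda>c::'n sconst. det (right_power_matrix c x))" for x
    unfolding det_def right_power_matrix_def vec_lambda_beta
    by (intro poly_fun_sum poly_fun.intros poly_fun_prod poly_fun_right_power_nth)
      (simp_all add: finite_permutations)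
  then show ?thesis
    unfolding zariski_closed_def
    by (intro exI[of _ "{\<lambda>c. det (right_power_matrix c x) | x. True}"]) auto
qed

theorem mainTheorem7:
  shows "\<exists>c :: 'n::finite sconst. rigid_in nbl_variety c"
proof
  have "null_filiform \<in> (nbl_variety :: 'n sconst set)"
    by (rule nbl_variety_if_leibniz_alg_nilpotent[OF leibniz_alg_null_filiform nilpotent_null_filiform])
  then show "rigid_in nbl_variety (null_filiform :: 'n sconst)"
    unfolding rigid_in_def zariski_open_in_def
    using orbit_null_filiform zariski_closed_singular_right_power_matrices by blast
qed

end
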